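(* Let $K\ge 1$ and fix an index $j\in\{1,\dots,K\}$. Let $\eta_1\in(0,1]$, $\eta_2\in(0,1]$, $P>0$, $\sigma_b^2>0$, $\sigma_D^2>0$, and for each $k\in\{1,\dots,K\}$ let $h_k,g_k\in\mathbb{C}\setminus\{0\}$ and $v_k\in\mathbb{R}$ with $v_k\ge -\eta_1\eta_2P|h_k|^2$. Define $$a_k=P|h_k|^2+\max\Big\{0,\frac{v_k}{\eta_1}\Big\}+\min\Big\{0,\frac{v_k}{\eta_1\eta_2}\Big\}+\sigma_b^2,$$ $$U_k=\Big(1+\min\Big\{0,\frac{v_k}{\eta_1\eta_2P|h_k|^2}\Big\}\Big)P|h_k|^2+\sigma_b^2 .$$ Fix values $x_k\in[\sigma_b^2,U_k]$ for all $k\neq j$, and for $x_j\in[\sigma_b^2,U_j]$ define $$F_1(x_j)=\Big(\sqrt{\eta_1|g_j|^2(a_j-x_j)\big(1-\tfrac{\sigma_b^2}{x_j}\big)}+\sum_{k\neq j}\sqrt{\eta_1|g_k|^2(a_k-x_k)\big(1-\tfrac{\sigma_b^2}{x_k}\big)}\Big)^2,$$ $$F_2(x_j)=\eta_1|g_j|^2(a_j-x_j)\frac{\sigma_b^2}{x_j}+\sum_{k\neq j}\eta_1|g_k|^2(a_k-x_k)\frac{\sigma_b^2}{x_k}+\sigma_D^2 .$$ Then for every $q\ge 0$ the function $x_j\mapsto F_1(x_j)-qF_2(x_j)$ is concave on $[\sigma_b^2,U_j]$.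
   Context: This is the per-coordinate subproblem arising in maximizing the end-to-end SNR of a wireless-powered amplify-and-forward relay network with power splitting: $x_k=\lambda_{k,I}P|h_k|^2+\sigma_b^2$ where $\lambda_{k,I}$ is the power-splitting ratio for information at relay $k$, $v_k$ is the battery energy-level variation, $h_k,g_k$ are source–relay and relay–destination channel gains, $\eta_1$ the energy conversion efficiency, $\eta_2$ the storage efficiency. In the paper the parameter $q$ is a value of the ratio $F_1/F_2$, hence nonnegative. *)

theory Defs
  imports "HOL-Analysis.Analysis"
begin

text \<open>sb2 stands for sigma_b^2 (the relay noise variance), sD2 for sigma_D^2.\<close>

definition a_coef :: "real \<Rightarrow> real \<Rightarrow> real \<Rightarrow> real \<Rightarrow> complex \<Rightarrow> real \<Rightarrow> real" where
  "a_coef eta1 eta2 P sb2 h v =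
     P * (cmod h)^2 + max 0 (v / eta1) + min 0 (v / (eta1 * eta2)) + sb2"

definition U_bound :: "real \<Rightarrow> real \<Rightarrow> real \<Rightarrow> real \<Rightarrow> complex \<Rightarrow> real \<Rightarrow> real" where
  "U_bound eta1 eta2 P sb2 h v =
     (1 + min 0 (v / (eta1 * eta2 * P * (cmod h)^2))) * P * (cmod h)^2 + sb2"

end

theory Submission
  imports Defs
begin

text \<open>Writing \<open>s\<close> for \<open>\<sigma>\<^sub>b\<^sup>2\<close>, the \<open>j\<close>-th term \<open>G(t) = c (a - t)(1 - s/t) = c (a + s - t - a s / t)\<close>
  is concave for \<open>t > 0\<close> and nonnegative on \<open>[s, U\<^sub>j]\<close> because \<open>U\<^sub>j \<le> a\<^sub>j\<close>. Hence \<open>\<surd>G\<close> is concave,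
  and so is \<open>F\<^sub>1 = (\<surd>G + S)\<^sup>2 = G + 2 S \<surd>G + S\<^sup>2\<close> for the constant \<open>S \<ge> 0\<close>, while
  \<open>c (a - t) s / t = c a s / t - c s\<close> makes \<open>F\<^sub>2\<close> convex in \<open>t\<close>.\<close>

lemma concave_on_cong:
  assumes "S = T" and "\<And>x. x \<in> T \<Longrightarrow> f x = g x"
  shows "concave_on S f \<longleftrightarrow> concave_on T g"
  using assms by (auto simp: concave_on_iff convex_def)

lemma convex_on_cong:
  assumes "S = T" and "\<And>x. x \<in> T \<Longrightarrow> f x = g x"
  shows "convex_on S f \<longleftrightarrow> convex_on T g"
  using assms by (auto simp: convex_on_def convex_def)

lemma sqrt_convex_comb_le:
  fixes u v a b :: real
  assumes "0 \<le> u" "0 \<le> v" "u + v = 1" "0 \<le> a" "0 \<le> b"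
  shows "u * sqrt a + v * sqrt b \<le> sqrt (u * a + v * b)"
proof (rule real_le_rsqrt)
  have v: "v = 1 - u" using assms(3) by simp
  have "u * a + v * b - (u * sqrt a + v * sqrt b)\<^sup>2 = u * v * (sqrt a - sqrt b)\<^sup>2"
    using assms unfolding v by (simp add: power2_eq_square algebra_simps)
  also have "\<dots> \<ge> 0" using assms by simp
  finally show "(u * sqrt a + v * sqrt b)\<^sup>2 \<le> u * a + v * b" by simp
qed

lemma concave_on_sqrt_comp:
  fixes f :: "'a::real_vector \<Rightarrow> real"
  assumes "concave_on S f" and "\<And>x. x \<in> S \<Longrightarrow> 0 \<le> f x"
  shows "concave_on S (\<lambda>x. sqrt (f x))"
  unfolding concave_on_iff
proof (intro conjI ballI allI impI)
  show "convex S" using assms(1) by (rule concave_on_imp_convex)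
  fix x y u v assume xy: "x \<in> S" "y \<in> S" and uv: "0 \<le> (u::real)" "0 \<le> v" "u + v = 1"
  have "u * sqrt (f x) + v * sqrt (f y) \<le> sqrt (u * f x + v * f y)"
    using uv xy assms(2) by (intro sqrt_convex_comb_le) auto
  also have "\<dots> \<le> sqrt (f (u *\<^sub>R x + v *\<^sub>R y))"
    using assms(1) xy uv by (simp add: concave_on_iff)
  finally show "u * sqrt (f x) + v * sqrt (f y) \<le> sqrt (f (u *\<^sub>R x + v *\<^sub>R y))" .
qed

lemma concave_on_sqrt_add_square:
  fixes f :: "'a::real_vector \<Rightarrow> real"
  assumes "concave_on S f" and "\<And>x. x \<in> S \<Longrightarrow> 0 \<le> f x" and "0 \<le> b"
  shows "concave_on S (\<lambda>x. (sqrt (f x) + b)\<^sup>2)"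
proof -
  have "convex S" using assms(1) by (rule concave_on_imp_convex)
  then have concave: "concave_on S (\<lambda>x. f x + 2 * b * sqrt (f x) + b\<^sup>2)"
    using assms by (intro concave_on_add concave_on_cmul concave_on_sqrt_comp)
      (simp_all add: concave_on_const)
  have eq: "f x + 2 * b * sqrt (f x) + b\<^sup>2 = (sqrt (f x) + b)\<^sup>2" if "x \<in> S" for x
    using assms(2)[OF that] by (simp add: power2_sum)
  show ?thesis by (rule iffD1[OF concave_on_cong[OF refl eq] concave])
qed

lemma concave_on_mul_diff_mul_one_minus_div:
  fixes a c s :: real
  assumes "0 \<le> c" and "0 \<le> a * s"
  shows "concave_on {0<..} (\<lambda>t. c * (a - t) * (1 - s / t))"
proof -
  have concave: "concave_on {0<..} (\<lambda>t. c * ((a + s - t) - a * s * inverse t))"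
    using assms by (intro concave_on_cmul concave_on_diff convex_on_cmul convex_on_inverse)
      (auto simp: concave_on_const convex_on_ident)
  have eq: "c * ((a + s - t) - a * s * inverse t) = c * (a - t) * (1 - s / t)"
    if "t \<in> {0<..}" for t
    using that by (simp add: field_simps)
  show ?thesis by (rule iffD1[OF concave_on_cong[OF refl eq] concave])
qed

lemma convex_on_mul_diff_mul_div:
  fixes a c s :: real
  assumes "0 \<le> c" and "0 \<le> a * s"
  shows "convex_on {0<..} (\<lambda>t. c * (a - t) * (s / t))"
proof -
  have convex: "convex_on {0<..} (\<lambda>t. c * (a * s) * inverse t + - (c * s))"
    using assms by (intro convex_on_add convex_on_cmul convex_on_inverse) (auto simp: convex_on_const)
  have eq: "c * (a * s) * inverse t + - (c * s) = c * (a - t) * (s / t)"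
    if "t \<in> {0<..}" for t
    using that by (simp add: field_simps)
  show ?thesis by (rule iffD1[OF convex_on_cong[OF refl eq] convex])
qed

lemma mul_diff_mul_one_minus_div_nonneg:
  fixes a c s t :: real
  assumes "0 \<le> c" "0 < s" "s \<le> t" "t \<le> a"
  shows "0 \<le> c * (a - t) * (1 - s / t)"
  using assms by simp

lemma U_bound_le_a_coef:
  assumes "P > 0" "h \<noteq> 0" "eta1 > 0" "eta2 > 0"
  shows "U_bound eta1 eta2 P sb2 h v \<le> a_coef eta1 eta2 P sb2 h v"
proof (cases "v \<ge> 0")
  case True
  then show ?thesis using assms by (simp add: U_bound_def a_coef_def)
next
  case False
  have Ph: "P * (cmod h)\<^sup>2 > 0" using assms by simp
  then have "(1 + v / (eta1 * eta2 * P * (cmod h)\<^sup>2)) * P * (cmod h)\<^sup>2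
      = P * (cmod h)\<^sup>2 + v / (eta1 * eta2)"
    using assms by (simp add: field_simps)
  moreover have "v / eta1 < 0" "v / (eta1 * eta2) < 0"
    "v / (eta1 * eta2 * P * (cmod h)\<^sup>2) < 0"
    using False assms Ph by (simp_all add: divide_neg_pos mult.assoc)
  ultimately show ?thesis by (simp add: U_bound_def a_coef_def)
qed

lemma le_U_bound:
  assumes "P > 0" "h \<noteq> 0" "eta1 > 0" "eta2 > 0"
    and "v \<ge> - eta1 * eta2 * P * (cmod h)\<^sup>2"
  shows "sb2 \<le> U_bound eta1 eta2 P sb2 h v"
proof -
  have "eta1 * eta2 * P * (cmod h)\<^sup>2 > 0" using assms by simp
  then have "v / (eta1 * eta2 * P * (cmod h)\<^sup>2) \<ge> -1"
    using assms(5) by (simp add: field_simps)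
  then show ?thesis using assms by (simp add: U_bound_def)
qed

theorem lemma2:
  fixes K j :: nat and eta1 eta2 P sb2 sD2 q :: real
    and h g :: "nat \<Rightarrow> complex" and v x :: "nat \<Rightarrow> real"
  assumes "K \<ge> 1" and "j \<in> {1..K}"
    and "0 < eta1" "eta1 \<le> 1" "0 < eta2" "eta2 \<le> 1"
    and "P > 0" "sb2 > 0" "sD2 > 0"
    and "\<forall>k\<in>{1..K}. h k \<noteq> 0 \<and> g k \<noteq> 0"
    and "\<forall>k\<in>{1..K}. v k \<ge> - eta1 * eta2 * P * (cmod (h k))^2"
    and "\<forall>k\<in>{1..K} - {j}. sb2 \<le> x k \<and> x k \<le> U_bound eta1 eta2 P sb2 (h k) (v k)"
    and "q \<ge> 0"
  shows "concave_on {sb2 .. U_bound eta1 eta2 P sb2 (h j) (v j)}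
    (\<lambda>t. (sqrt (eta1 * (cmod (g j))^2 * (a_coef eta1 eta2 P sb2 (h j) (v j) - t) * (1 - sb2 / t))
           + (\<Sum>k\<in>{1..K} - {j}. sqrt (eta1 * (cmod (g k))^2 * (a_coef eta1 eta2 P sb2 (h k) (v k) - x k) * (1 - sb2 / x k))))^2
         - q * (eta1 * (cmod (g j))^2 * (a_coef eta1 eta2 P sb2 (h j) (v j) - t) * (sb2 / t)
           + (\<Sum>k\<in>{1..K} - {j}. eta1 * (cmod (g k))^2 * (a_coef eta1 eta2 P sb2 (h k) (v k) - x k) * (sb2 / x k))
           + sD2))"
proof -
  let ?U = "\<lambda>k. U_bound eta1 eta2 P sb2 (h k) (v k)"
  let ?a = "\<lambda>k. a_coef eta1 eta2 P sb2 (h k) (v k)"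
  let ?c = "\<lambda>k. eta1 * (cmod (g k))^2"
  let ?I = "{sb2 .. ?U j}"
  have U_le_a: "?U k \<le> ?a k" if "k \<in> {1..K}" for k
    using assms that by (intro U_bound_le_a_coef) auto
  have "sb2 \<le> ?U j" using assms by (intro le_U_bound) auto
  with U_le_a[OF \<open>j \<in> {1..K}\<close>] \<open>sb2 > 0\<close> have as_nonneg: "0 \<le> ?a j * sb2" by simp
  have c_nonneg: "0 \<le> ?c j" using \<open>0 < eta1\<close> by simp
  have I_pos: "?I \<subseteq> {0<..}" using \<open>sb2 > 0\<close> by auto
  have G_nonneg: "0 \<le> ?c j * (?a j - t) * (1 - sb2 / t)" if "t \<in> ?I" for t
    using that assms U_le_a[OF \<open>j \<in> {1..K}\<close>] by (intro mul_diff_mul_one_minus_div_nonneg) auto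
  have S_nonneg: "0 \<le> (\<Sum>k\<in>{1..K} - {j}. sqrt (?c k * (?a k - x k) * (1 - sb2 / x k)))"
  proof (intro sum_nonneg real_sqrt_ge_zero)
    fix k assume k: "k \<in> {1..K} - {j}"
    then show "0 \<le> ?c k * (?a k - x k) * (1 - sb2 / x k)"
      using assms U_le_a[of k] by (intro mul_diff_mul_one_minus_div_nonneg) force+
  qed
  have "concave_on ?I (\<lambda>t. ?c j * (?a j - t) * (1 - sb2 / t))"
    using concave_on_mul_diff_mul_one_minus_div[OF c_nonneg as_nonneg] I_pos
    by (simp add: concave_on_def convex_on_subset)
  then have F1: "concave_on ?I (\<lambda>t. (sqrt (?c j * (?a j - t) * (1 - sb2 / t))
      + (\<Sum>k\<in>{1..K} - {j}. sqrt (?c k * (?a k - x k) * (1 - sb2 / x k))))\<^sup>2)"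
    using G_nonneg S_nonneg by (rule concave_on_sqrt_add_square)
  have "convex_on ?I (\<lambda>t. ?c j * (?a j - t) * (sb2 / t))"
    using convex_on_mul_diff_mul_div[OF c_nonneg as_nonneg] I_pos by (simp add: convex_on_subset)
  then have F2: "convex_on ?I (\<lambda>t. q * (?c j * (?a j - t) * (sb2 / t)
      + (\<Sum>k\<in>{1..K} - {j}. ?c k * (?a k - x k) * (sb2 / x k)) + sD2))"
    using \<open>q \<ge> 0\<close> by (intro convex_on_cmul convex_on_add) (simp_all add: convex_on_const)
  from F1 F2 show ?thesis by (rule concave_on_diff)
qed

end
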